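(* Let $n\ge1$, let $L\subseteq\mathbb Z^n$ be a lattice, and let $(\cdot,\cdot)$ be an inner product on $\mathbb R^n$ for which the canonical basis $\vec e_1,\dots,\vec e_n$ is orthogonal. Assume $(L,(\cdot,\cdot))$ is a zonotopal lattice. Let $F$ be the linear subspace of $\mathbb R^n$ spanned by $L$ and let $\pi:\mathbb R^n\to F$ be the orthogonal projection onto $F$ with respect to $(\cdot,\cdot)$. Then $$\mathrm{DV}(L)=\pi(\mathrm{DV}(\mathbb Z^n))=\pi\big([-\tfrac12,\tfrac12]^n\big),$$ where $\mathrm{DV}(L)=\{\vec x\in F: (\vec x,\vec x)\le(\vec x-\vec v,\vec x-\vec v)\text{ for all }\vec v\in L\}$ and $\mathrm{DV}(\mathbb Z^n)=\{\vec x\in \mathbb R^n: (\vec x,\vec x)\le(\vec x-\vec v,\vec x-\vec v)\text{ for all }\vec v\in \mathbb Z^n\}$ are the Dirichlet–Voronoi polytopes with respect to $(\cdot,\cdot)$.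
   Context: A lattice $L\subseteq\mathbb Z^n$ is the $\mathbb Z$-span of finitely many linearly independent vectors of $\mathbb Z^n$. The support of $\vec v\in\mathbb R^n$ is $\underline{\vec v}=\{i: v_i\neq 0\}$. A vector $\vec u\in L$ is elementary if $\vec u\in\{-1,0,+1\}^n\setminus\{\vec 0\}$ and no nonzero vector of $L$ has support strictly contained in $\underline{\vec u}$. The pair $(L,(\cdot,\cdot))$ is a zonotopal lattice if for every $\vec v\in L\setminus\{\vec 0\}$ there is an elementary vector $\vec u\in L$ with $\underline{\vec u}\subseteq\underline{\vec v}$. *)

theory Defs
  imports "HOL-Analysis.Analysis"
begin

text \<open>Vectors of R^n are modelled as real^'n for a finite index type 'n (n = CARD('n) \<ge> 1).\<close>

definition int_vec :: "real^'n \<Rightarrow> bool" where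
  "int_vec x \<longleftrightarrow> (\<forall>i. x $ i \<in> \<int>)"

definition is_int_lattice :: "(real^'n) set \<Rightarrow> bool" where
  "is_int_lattice L \<longleftrightarrow>
     (\<exists>B. finite B \<and> (\<forall>b\<in>B. int_vec b) \<and> independent B \<and>
          L = {\<Sum>b\<in>B. c b *\<^sub>R b | c. \<forall>b\<in>B. c b \<in> \<int>})"

definition is_inner_product :: "(real^'n \<Rightarrow> real^'n \<Rightarrow> real) \<Rightarrow> bool" where
  "is_inner_product ip \<longleftrightarrow> bilinear ip \<and> (\<forall>x y. ip x y = ip y x) \<and>
     (\<forall>x. x \<noteq> 0 \<longrightarrow> ip x x > 0)"

definition supp :: "real^'n \<Rightarrow> 'n set" where
  "supp v = {i. v $ i \<noteq> 0}"

definition elementary :: "(real^'n) set \<Rightarrow> real^'n \<Rightarrow> bool" where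
  "elementary L u \<longleftrightarrow> u \<in> L \<and> u \<noteq> 0 \<and> (\<forall>i. u $ i \<in> {-1, 0, 1}) \<and>
     \<not> (\<exists>w\<in>L. w \<noteq> 0 \<and> supp w \<subset> supp u)"

text \<open>The defining condition of a zonotopal lattice (it does not depend on the inner product).\<close>
definition zonotopal_lattice :: "(real^'n) set \<Rightarrow> (real^'n \<Rightarrow> real^'n \<Rightarrow> real) \<Rightarrow> bool" where
  "zonotopal_lattice L ip \<longleftrightarrow>
     (\<forall>v\<in>L. v \<noteq> 0 \<longrightarrow> (\<exists>u. elementary L u \<and> supp u \<subseteq> supp v))"

definition orth_proj :: "(real^'n \<Rightarrow> real^'n \<Rightarrow> real) \<Rightarrow> (real^'n) set \<Rightarrow> real^'n \<Rightarrow> real^'n" where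
  "orth_proj ip F x = (THE y. y \<in> F \<and> (\<forall>f\<in>F. ip (x - y) f = 0))"

definition DV :: "(real^'n \<Rightarrow> real^'n \<Rightarrow> real) \<Rightarrow> (real^'n) set \<Rightarrow> (real^'n) set" where
  "DV ip L = {x \<in> span L. \<forall>v\<in>L. ip x x \<le> ip (x - v) (x - v)}"

definition Zn :: "(real^'n) set" where
  "Zn = {x. int_vec x}"

definition half_cube :: "(real^'n) set" where
  "half_cube = {x. \<forall>i. -1/2 \<le> x $ i \<and> x $ i \<le> 1/2}"

end

theory Submission
  imports Defs
begin

(* Write the inner product as (x, y) = \<Sum>i. w i * x$i * y$i with w i > 0 and put
   N u = \<Sum>i. w i * |u$i|.  Then DV(Z^n) is the cube [-1/2, 1/2]^n, and a point x of the
   span F of L lies in the projected cube iff 2 (u, x) \<le> N u for all u in F, because N/2 is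
   the support function of the cube and (u, \<pi> y) = (u, y) for u in F.  Every integer vector v
   has N v \<le> (v, v), with equality for {-1,0,1}-vectors; this gives \<pi>(cube) \<subseteq> DV(L).
   Conversely, in a zonotopal lattice every vector is a sum of elementary vectors conformal to
   it, on which N is additive, so x \<in> DV(L) satisfies 2 (x, u) \<le> N u for u in L, and by
   homogeneity and continuity for all u in F. *)

lemma bilinear_diagonal_expansion:
  fixes ip :: "real^'n \<Rightarrow> real^'n \<Rightarrow> real"
  assumes bl: "bilinear ip" and orth: "\<forall>i j. i \<noteq> j \<longrightarrow> ip (axis i 1) (axis j 1) = 0"
  shows "ip x y = (\<Sum>i\<in>UNIV. ip (axis i 1) (axis i 1) * x$i * y$i)"
proof -
  have expansion: "z = (\<Sum>i\<in>UNIV. z$i *\<^sub>R axis i 1)" for z :: "real^'n"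
    using basis_expansion[of z] by (simp add: scalar_mult_eq_scaleR)
  have "ip x y = ip (\<Sum>i\<in>UNIV. x$i *\<^sub>R axis i 1) (\<Sum>j\<in>UNIV. y$j *\<^sub>R axis j 1)"
    using expansion[of x] expansion[of y] by simp
  also have "\<dots> = (\<Sum>i\<in>UNIV. \<Sum>j\<in>UNIV. x$i * y$j * ip (axis i 1) (axis j 1))"
    unfolding bilinear_sum[OF bl] sum.cartesian_product[symmetric]
    by (simp add: bilinear_lmul[OF bl] bilinear_rmul[OF bl] ac_simps)
  also have "\<dots> = (\<Sum>i\<in>UNIV. x$i * y$i * ip (axis i 1) (axis i 1))"
  proof (rule sum.cong[OF refl])
    fix i
    show "(\<Sum>j\<in>UNIV. x$i * y$j * ip (axis i 1) (axis j 1)) = x$i * y$i * ip (axis i 1) (axis i 1)"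
      by (subst sum.remove[of _ i]) (auto simp: orth intro!: sum.neutral)
  qed
  finally show ?thesis
    by (simp add: ac_simps)
qed

lemma int_lattice_zero: "is_int_lattice L \<Longrightarrow> 0 \<in> L"
  unfolding is_int_lattice_def by (auto intro!: exI[of _ "\<lambda>_. 0"])

lemma int_lattice_add:
  assumes "is_int_lattice L" "u \<in> L" "v \<in> L"
  shows "u + v \<in> L"
proof -
  obtain B where L: "L = {\<Sum>b\<in>B. c b *\<^sub>R b | c. \<forall>b\<in>B. c b \<in> \<int>}"
    using assms(1) unfolding is_int_lattice_def by blast
  obtain c d where "u = (\<Sum>b\<in>B. c b *\<^sub>R b)" "\<forall>b\<in>B. c b \<in> \<int>"
    and "v = (\<Sum>b\<in>B. d b *\<^sub>R b)" "\<forall>b\<in>B. d b \<in> \<int>"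
    using assms(2,3) unfolding L by auto
  then show ?thesis
    unfolding L by (auto simp: sum.distrib scaleR_add_left intro!: exI[of _ "\<lambda>b. c b + d b"])
qed

lemma int_lattice_scaleR:
  assumes "is_int_lattice L" "u \<in> L" "k \<in> \<int>"
  shows "k *\<^sub>R u \<in> L"
proof -
  obtain B where L: "L = {\<Sum>b\<in>B. c b *\<^sub>R b | c. \<forall>b\<in>B. c b \<in> \<int>}"
    using assms(1) unfolding is_int_lattice_def by blast
  obtain c where "u = (\<Sum>b\<in>B. c b *\<^sub>R b)" "\<forall>b\<in>B. c b \<in> \<int>"
    using assms(2) unfolding L by auto
  then show ?thesis
    using assms(3) unfolding L by (auto simp: scaleR_sum_right intro!: exI[of _ "\<lambda>b. k * c b"])
qed

lemma int_lattice_uminus: "is_int_lattice L \<Longrightarrow> u \<in> L \<Longrightarrow> - u \<in> L"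
  using int_lattice_scaleR[of L u "-1"] by simp

lemma int_lattice_diff: "is_int_lattice L \<Longrightarrow> u \<in> L \<Longrightarrow> v \<in> L \<Longrightarrow> u - v \<in> L"
  using int_lattice_add[of L u "- v"] int_lattice_uminus[of L v] by simp

lemma int_lattice_int_vec:
  assumes "is_int_lattice L" "u \<in> L"
  shows "int_vec u"
proof -
  obtain B where B: "\<forall>b\<in>B. int_vec b" and L: "L = {\<Sum>b\<in>B. c b *\<^sub>R b | c. \<forall>b\<in>B. c b \<in> \<int>}"
    using assms(1) unfolding is_int_lattice_def by blast
  obtain c where "u = (\<Sum>b\<in>B. c b *\<^sub>R b)" "\<forall>b\<in>B. c b \<in> \<int>"
    using assms(2) unfolding L by auto
  then show ?thesis
    using B by (auto simp: int_vec_def intro!: Ints_sum Ints_mult)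
qed

lemma int_lattice_int_combination:
  assumes "is_int_lattice L" "finite S" "S \<subseteq> L" "\<forall>s\<in>S. k s \<in> \<int>"
  shows "(\<Sum>s\<in>S. k s *\<^sub>R s) \<in> L"
  using assms(2-4)
  by (induction S rule: finite_induct)
    (auto intro: int_lattice_zero int_lattice_add int_lattice_scaleR assms(1))

lemma floor_scaled_tendsto: "(\<lambda>m. \<lfloor>(real m + 1) * c\<rfloor> / (real m + 1)) \<longlonglongrightarrow> c"
proof (rule real_tendsto_sandwich)
  have "(\<lambda>m. 1 / (real m + 1)) \<longlonglongrightarrow> 0"
    using LIMSEQ_inverse_real_of_nat by (simp add: divide_inverse add.commute)
  then show "(\<lambda>m. c - 1 / (real m + 1)) \<longlonglongrightarrow> c"
    using tendsto_diff[OF tendsto_const[of c]] by fastforce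
  have "c - 1 / (real m + 1) \<le> \<lfloor>(real m + 1) * c\<rfloor> / (real m + 1)"
    and "\<lfloor>(real m + 1) * c\<rfloor> / (real m + 1) \<le> c" for m
  proof -
    have "c - 1 / (real m + 1) = ((real m + 1) * c - 1) / (real m + 1)"
      by (simp add: field_simps)
    then show "c - 1 / (real m + 1) \<le> \<lfloor>(real m + 1) * c\<rfloor> / (real m + 1)"
      by (simp add: divide_right_mono)
    show "\<lfloor>(real m + 1) * c\<rfloor> / (real m + 1) \<le> c"
      by (simp add: pos_divide_le_eq mult.commute)
  qed
  then show "\<forall>\<^sub>F m in sequentially. c - 1 / (real m + 1) \<le> \<lfloor>(real m + 1) * c\<rfloor> / (real m + 1)"
    and "\<forall>\<^sub>F m in sequentially. \<lfloor>(real m + 1) * c\<rfloor> / (real m + 1) \<le> c"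
    by simp_all
qed simp

lemma nonneg_on_span_if_nonneg_on_int_combinations:
  fixes f :: "'a::real_normed_vector \<Rightarrow> real"
  assumes int_comb: "\<And>S k. finite S \<Longrightarrow> S \<subseteq> L \<Longrightarrow> \<forall>s\<in>S. k s \<in> \<int> \<Longrightarrow> (\<Sum>s\<in>S. k s *\<^sub>R s) \<in> L"
    and nonneg: "\<And>v. v \<in> L \<Longrightarrow> 0 \<le> f v"
    and homogeneous: "\<And>c v. 0 < c \<Longrightarrow> f (c *\<^sub>R v) = c * f v"
    and cont: "continuous_on UNIV f"
    and u: "u \<in> span L"
  shows "0 \<le> f u"
proof -
  obtain S r where S: "finite S" "S \<subseteq> L" and u_eq: "u = (\<Sum>s\<in>S. r s *\<^sub>R s)"
    using u unfolding span_explicit by blast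
  define z where "z m = (\<Sum>s\<in>S. real_of_int \<lfloor>(real m + 1) * r s\<rfloor> *\<^sub>R s)" for m :: nat
  have "(\<lambda>m. (1 / (real m + 1)) *\<^sub>R z m) \<longlonglongrightarrow> u"
    unfolding z_def u_eq scaleR_sum_right scaleR_scaleR
    by (intro tendsto_sum tendsto_scaleR tendsto_const) (simp add: floor_scaled_tendsto)
  then have "(\<lambda>m. f ((1 / (real m + 1)) *\<^sub>R z m)) \<longlonglongrightarrow> f u"
    by (rule continuous_on_tendsto_compose[OF cont]) auto
  moreover have "0 \<le> f ((1 / (real m + 1)) *\<^sub>R z m)" for m
    using homogeneous nonneg[OF int_comb[OF S]] by (simp add: z_def)
  ultimately show ?thesis
    by (simp add: LIMSEQ_le_const)
qed

definition conformal :: "real^'n \<Rightarrow> real^'n \<Rightarrow> bool" where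
  "conformal x y \<longleftrightarrow> (\<forall>i. x$i \<noteq> 0 \<longrightarrow> 0 < x$i * y$i)"

lemma conformal_refl: "conformal x x"
  by (auto simp: conformal_def zero_less_mult_iff linorder_neq_iff)

lemma conformal_trans:
  assumes "conformal x y" "conformal y z"
  shows "conformal x z"
proof -
  have "0 < a * c" if "0 < a * b" "0 < b * c" for a b c :: real
    using that by (auto simp: zero_less_mult_iff)
  then show ?thesis
    using assms unfolding conformal_def by (metis mult_eq_0_iff less_irrefl)
qed

lemma conformal_scaleR: "0 < t \<Longrightarrow> conformal x (t *\<^sub>R x)"
  by (auto simp: conformal_def zero_less_mult_iff linorder_neq_iff mult_pos_neg)

lemma supp_conformal: "conformal x y \<Longrightarrow> supp x \<subseteq> supp y"
  by (auto simp: conformal_def supp_def)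

lemma elementary_uminus: "is_int_lattice L \<Longrightarrow> elementary L e \<Longrightarrow> elementary L (- e)"
  unfolding elementary_def by (auto simp: supp_def int_lattice_uminus)

lemma sign_vector_mult_pos: "(e::real) \<in> {-1, 0, 1} \<Longrightarrow> 0 < e * v \<Longrightarrow> e * v = \<bar>v\<bar>"
  by auto

lemma conformal_reduction:
  fixes v e :: "real^'n"
  assumes e: "\<forall>i. e$i \<in> {-1, 0, 1}" and supp_e: "supp e \<subseteq> supp v" and j: "0 < e$j * v$j"
  obtains i where "i \<in> supp v" "(v - \<bar>v$i\<bar> *\<^sub>R e)$i = 0" "conformal (v - \<bar>v$i\<bar> *\<^sub>R e) v"
proof -
  define P where "P = {k. 0 < e$k * v$k}"
  obtain i where i: "i \<in> P" and i_min: "\<And>k. k \<in> P \<Longrightarrow> \<bar>v$i\<bar> \<le> \<bar>v$k\<bar>"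
    using ex_is_arg_min_if_finite[of P "\<lambda>k. \<bar>v$k\<bar>"] j
    by (auto simp: P_def is_arg_min_linorder)
  define v' where "v' = v - \<bar>v$i\<bar> *\<^sub>R e"
  have v'_mult: "v'$k * v$k = v$k * v$k - \<bar>v$i\<bar> * (e$k * v$k)" for k
    by (simp add: v'_def algebra_simps)
  have "0 \<le> v'$k * v$k" for k
  proof (cases "k \<in> P")
    case True
    then have "e$k * v$k = \<bar>v$k\<bar>"
      using e sign_vector_mult_pos by (simp add: P_def)
    then have "v'$k * v$k = \<bar>v$k\<bar> * (\<bar>v$k\<bar> - \<bar>v$i\<bar>)"
      unfolding v'_mult by (simp add: algebra_simps abs_mult_self_eq)
    then show ?thesis
      using i_min[OF True] by simp
  next
    case False
    then have "\<bar>v$i\<bar> * (e$k * v$k) \<le> 0"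
      by (simp add: P_def mult_nonneg_nonpos)
    then show ?thesis
      unfolding v'_mult using zero_le_square[of "v$k"] by linarith
  qed
  moreover have "v$k = 0 \<Longrightarrow> v'$k = 0" for k
    using supp_e by (auto simp: v'_def supp_def)
  ultimately have "conformal v' v"
    unfolding conformal_def by (metis less_eq_real_def mult_eq_0_iff)
  moreover have "v'$i = 0" "i \<in> supp v"
    using i e sign_vector_mult_pos[of "e$i" "v$i"] by (auto simp: v'_def P_def supp_def algebra_simps)
  ultimately show ?thesis
    using that unfolding v'_def by blast
qed

lemma zonotopal_lattice_conformal_elementary:
  assumes L: "is_int_lattice L" and zono: "zonotopal_lattice L ip" and u: "u \<in> L" "u \<noteq> 0"
  obtains e where "elementary L e" "conformal e u"
proof -
  \<comment> \<open>A nonzero lattice vector conformal to u with minimal support is a multiple of an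
    elementary vector: otherwise subtracting that multiple would shrink the support.\<close>
  define C where "C = {v \<in> L. v \<noteq> 0 \<and> conformal v u}"
  have "u \<in> C"
    using u conformal_refl by (simp add: C_def)
  then obtain v where v: "v \<in> C" and v_min: "\<And>v'. v' \<in> C \<Longrightarrow> card (supp v) \<le> card (supp v')"
    using ex_has_least_nat[of "\<lambda>v. v \<in> C" u "\<lambda>v. card (supp v)"] by blast
  then obtain e where e: "elementary L e" "supp e \<subseteq> supp v"
    using zono by (auto simp: zonotopal_lattice_def C_def)
  then obtain j where "e$j \<noteq> 0"
    by (auto simp: elementary_def vec_eq_iff)
  moreover have "v$j \<noteq> 0"
    using e(2) \<open>e$j \<noteq> 0\<close> by (auto simp: supp_def)
  ultimately have "0 < e$j * v$j \<or> 0 < (- e)$j * v$j"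
    by (auto simp: zero_less_mult_iff linorder_neq_iff mult_neg_pos mult_pos_neg)
  moreover have "elementary L (- e)" "supp (- e) = supp e"
    using elementary_uminus[OF L e(1)] by (auto simp: supp_def)
  ultimately obtain e' where e': "elementary L e'" "supp e' \<subseteq> supp v" "0 < e'$j * v$j"
    using e by metis
  then obtain i where i: "i \<in> supp v" "(v - \<bar>v$i\<bar> *\<^sub>R e')$i = 0"
    and conf: "conformal (v - \<bar>v$i\<bar> *\<^sub>R e') v"
    using conformal_reduction[of e' v j] by (auto simp: elementary_def)
  have "v - \<bar>v$i\<bar> *\<^sub>R e' = 0"
  proof (rule ccontr)
    assume nonzero: "v - \<bar>v$i\<bar> *\<^sub>R e' \<noteq> 0"
    have "\<bar>v$i\<bar> \<in> \<int>"
      using int_lattice_int_vec[OF L] v by (auto simp: C_def int_vec_def)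
    then have "v - \<bar>v$i\<bar> *\<^sub>R e' \<in> C"
      using v e' nonzero conformal_trans[OF conf] L
      by (auto simp: C_def elementary_def intro!: int_lattice_diff int_lattice_scaleR)
    moreover have "supp (v - \<bar>v$i\<bar> *\<^sub>R e') \<subset> supp v"
      using supp_conformal[OF conf] i by (auto simp: supp_def)
    then have "card (supp (v - \<bar>v$i\<bar> *\<^sub>R e')) < card (supp v)"
      by (simp add: psubset_card_mono)
    ultimately show False
      using v_min by fastforce
  qed
  then have "conformal e' v"
    using conformal_scaleR[of "\<bar>v$i\<bar>" e'] i(1) by (simp add: supp_def)
  then show ?thesis
    using that e'(1) conformal_trans v by (auto simp: C_def)
qed

lemma conformal_abs_split:
  assumes "conformal e u" "e$i \<in> {-1, 0, 1}" "u$i \<in> \<int>"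
  shows "\<bar>u$i\<bar> = \<bar>u$i - e$i\<bar> + \<bar>e$i\<bar>"
proof -
  have sign: "e$i \<noteq> 0 \<Longrightarrow> 0 < e$i * u$i"
    using assms(1) by (simp add: conformal_def)
  have ge1: "e$i \<noteq> 0 \<Longrightarrow> 1 \<le> \<bar>u$i\<bar>"
    using sign assms(3) Ints_nonzero_abs_ge1[of "u$i"] by force
  consider "e$i = -1" | "e$i = 0" | "e$i = 1"
    using assms(2) by auto
  then show ?thesis
  proof cases
    case 1
    with sign ge1 have "u$i \<le> -1" by simp
    with 1 show ?thesis by simp
  next
    case 3
    with sign ge1 have "1 \<le> u$i" by simp
    with 3 show ?thesis by simp
  qed simp
qed

locale diagonal_inner_product =
  fixes ip :: "real^'n \<Rightarrow> real^'n \<Rightarrow> real" and w :: "'n \<Rightarrow> real"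
  assumes ip_eq: "ip x y = (\<Sum>i\<in>UNIV. w i * x$i * y$i)"
    and weight_pos: "0 < w i"
begin

lemma bilinear_ip: "bilinear ip"
  unfolding bilinear_def linear_iff
  by (simp add: ip_eq algebra_simps sum.distrib sum_distrib_left)

lemmas ip_add_left = bilinear_ladd[OF bilinear_ip]
  and ip_diff_left = bilinear_lsub[OF bilinear_ip]
  and ip_diff_right = bilinear_rsub[OF bilinear_ip]
  and ip_scaleR_left = bilinear_lmul[OF bilinear_ip]
  and ip_scaleR_right = bilinear_rmul[OF bilinear_ip]
  and ip_uminus_left = bilinear_lneg[OF bilinear_ip]

lemma ip_commute: "ip x y = ip y x"
  by (simp add: ip_eq ac_simps)

lemma ip_self_eq_0: "ip z z = 0 \<Longrightarrow> z = 0"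
proof -
  assume "ip z z = 0"
  then have "\<forall>i\<in>UNIV. w i * (z$i * z$i) = 0"
    unfolding ip_eq
    by (subst sum_nonneg_eq_0_iff[symmetric]) (auto simp: weight_pos less_imp_le mult.assoc)
  then show "z = 0"
    using weight_pos by (auto simp: vec_eq_iff) (metis less_irrefl)
qed

lemma mem_DV_iff: "x \<in> DV ip L \<longleftrightarrow> x \<in> span L \<and> (\<forall>v\<in>L. 2 * ip x v \<le> ip v v)"
proof -
  have "ip (x - v) (x - v) = ip x x - 2 * ip x v + ip v v" for v
    by (simp add: ip_diff_left ip_diff_right ip_commute[of v x])
  then show ?thesis
    by (auto simp: DV_def)
qed

definition weighted_l1_norm :: "real^'n \<Rightarrow> real" where
  "weighted_l1_norm u = (\<Sum>i\<in>UNIV. w i * \<bar>u$i\<bar>)"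

lemma weighted_l1_norm_uminus: "weighted_l1_norm (- u) = weighted_l1_norm u"
  by (simp add: weighted_l1_norm_def)

lemma weighted_l1_norm_scaleR: "0 \<le> c \<Longrightarrow> weighted_l1_norm (c *\<^sub>R u) = c * weighted_l1_norm u"
  by (simp add: weighted_l1_norm_def abs_mult sum_distrib_left algebra_simps)

lemma continuous_on_weighted_l1_norm: "continuous_on S weighted_l1_norm"
  unfolding weighted_l1_norm_def by (intro continuous_intros)

lemma half_cube_ip_le_weighted_l1_norm:
  assumes "y \<in> half_cube"
  shows "2 * ip y u \<le> weighted_l1_norm u"
proof -
  have "w i * (2 * y$i * u$i) \<le> w i * \<bar>u$i\<bar>" for i
  proof -
    have "2 * y$i * u$i \<le> 2 * \<bar>y$i\<bar> * \<bar>u$i\<bar>"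
      by (simp add: abs_mult[symmetric] mult.assoc)
    also have "\<dots> \<le> \<bar>u$i\<bar>"
    proof -
      have "-1/2 \<le> y$i" "y$i \<le> 1/2"
        using assms by (simp_all add: half_cube_def)
      then have "2 * \<bar>y$i\<bar> \<le> 1"
        by linarith
      then show ?thesis
        using mult_right_mono[of "2 * \<bar>y$i\<bar>" 1 "\<bar>u$i\<bar>"] by simp
    qed
    finally show ?thesis
      using weight_pos[of i] by simp
  qed
  then show ?thesis
    unfolding ip_eq weighted_l1_norm_def sum_distrib_left
    by (force simp: algebra_simps intro: sum_mono)
qed

lemma weighted_l1_norm_le_ip_self:
  assumes "int_vec v"
  shows "weighted_l1_norm v \<le> ip v v"
proof -
  have "\<bar>v$i\<bar> \<le> v$i * v$i" for i
    using assms Ints_nonzero_abs_ge1[of "v$i"] mult_left_mono[of 1 "\<bar>v$i\<bar>" "\<bar>v$i\<bar>"]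
    by (cases "v$i = 0") (auto simp: int_vec_def abs_mult_self_eq)
  then show ?thesis
    unfolding ip_eq weighted_l1_norm_def
    by (intro sum_mono) (simp add: weight_pos mult.assoc)
qed

lemma weighted_l1_norm_eq_ip_self:
  assumes "\<forall>i. v$i \<in> {-1, 0, 1}"
  shows "weighted_l1_norm v = ip v v"
proof -
  have "\<bar>v$i\<bar> = v$i * v$i" for i
    using assms[rule_format, of i] by auto
  then show ?thesis
    unfolding ip_eq weighted_l1_norm_def by (simp add: mult.assoc)
qed

lemma orth_proj_exists:
  assumes "subspace F"
  shows "\<exists>x\<in>F. \<forall>f\<in>F. ip (y - x) f = 0"
proof -
  define D where "D v = (\<chi> i. sqrt (w i) * v$i)" for v :: "real^'n"
  have "linear D"
    by (rule linearI) (simp_all add: D_def vec_eq_iff algebra_simps)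
  have ip_D: "ip a b = D a \<bullet> D b" for a b
  proof -
    have "w i * a$i * b$i = sqrt (w i) * a$i * (sqrt (w i) * b$i)" for i
      using real_sqrt_mult_self[of "w i"] weight_pos[of i] by (simp add: ac_simps)
    then show ?thesis
      unfolding ip_eq inner_vec_def D_def vec_lambda_beta inner_real_def by (intro sum.cong refl)
  qed
  obtain a z where a: "a \<in> span (D ` F)" and z: "\<And>f. f \<in> span (D ` F) \<Longrightarrow> orthogonal z f"
    and Dy: "D y = a + z"
    using orthogonal_subspace_decomp_exists[of "D ` F" "D y"] by blast
  have "span (D ` F) = D ` F"
    using linear_subspace_image[OF \<open>linear D\<close> assms] by (simp add: span_eq_iff)
  with a obtain x where x: "x \<in> F" "a = D x"
    by auto
  have "D (y - x) = z"
    using Dy x linear_diff[OF \<open>linear D\<close>] by simp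
  then have "ip (y - x) f = 0" if "f \<in> F" for f
    using z[of "D f"] that unfolding ip_D by (auto simp: orthogonal_def span_base)
  with x show ?thesis
    by blast
qed

lemma orth_proj_eqI:
  assumes F: "subspace F" and x: "x \<in> F" "\<forall>f\<in>F. ip (y - x) f = 0"
  shows "orth_proj ip F y = x"
  unfolding orth_proj_def
proof (rule the_equality)
  fix x' assume x': "x' \<in> F \<and> (\<forall>f\<in>F. ip (y - x') f = 0)"
  then have "x - x' \<in> F"
    using F x by (simp add: subspace_diff)
  then have "ip (x - x') (x - x') = 0"
    using x x' ip_diff_left[of "y - x'" "y - x" "x - x'"] by simp
  then show "x' = x"
    using ip_self_eq_0[of "x - x'"] by simp
qed (use x in blast)

lemma orth_proj_in: "subspace F \<Longrightarrow> orth_proj ip F y \<in> F"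
  using orth_proj_exists orth_proj_eqI by metis

lemma ip_orth_proj: "subspace F \<Longrightarrow> f \<in> F \<Longrightarrow> ip (orth_proj ip F y) f = ip y f"
  using orth_proj_exists[of F y] orth_proj_eqI[of F _ y] by (force simp: ip_diff_left)

lemma linear_orth_proj:
  assumes F: "subspace F"
  shows "linear (orth_proj ip F)"
proof (rule linearI)
  let ?P = "orth_proj ip F"
  show "?P (a + b) = ?P a + ?P b" for a b
    using F by (intro orth_proj_eqI)
      (simp_all add: orth_proj_in subspace_add ip_diff_left ip_add_left ip_orth_proj)
  show "?P (c *\<^sub>R a) = c *\<^sub>R ?P a" for c a
    using F by (intro orth_proj_eqI)
      (simp_all add: orth_proj_in subspace_scale ip_diff_left ip_scaleR_left ip_orth_proj)
qed

lemma DV_Zn_eq_half_cube: "DV ip Zn = half_cube"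
proof -
  have axis_Zn: "axis i c \<in> Zn" if "c \<in> \<int>" for i and c :: real
    using that by (auto simp: Zn_def int_vec_def axis_def)
  have "x \<in> span Zn" for x :: "real^'n"
  proof -
    have "(\<Sum>i\<in>UNIV. x$i *\<^sub>R axis i 1) \<in> span Zn"
      by (intro span_sum span_scale span_base axis_Zn) simp
    then show ?thesis
      using basis_expansion[of x] by (simp add: scalar_mult_eq_scaleR)
  qed
  then have DV_Zn: "x \<in> DV ip Zn \<longleftrightarrow> (\<forall>v\<in>Zn. 2 * ip x v \<le> ip v v)" for x
    by (simp add: mem_DV_iff)
  have ip_axis: "ip x (axis i c) = w i * x$i * c" for x i c
    by (simp add: ip_eq axis_def if_distrib[of "\<lambda>t. _ * t"] cong: if_cong)
  have "-1/2 \<le> x$i \<and> x$i \<le> 1/2" if "x \<in> DV ip Zn" for x i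
  proof -
    have "w i * (2 * x$i * c) \<le> w i * (c * c)" if "c \<in> \<int>" for c
      using DV_Zn \<open>x \<in> DV ip Zn\<close> axis_Zn[OF that, of i] by (force simp: ip_axis algebra_simps)
    then have "2 * x$i * c \<le> c * c" if "c \<in> \<int>" for c
      using that weight_pos[of i] mult_le_cancel_left_pos by blast
    from this[of 1] this[of "-1"] show ?thesis
      by simp
  qed
  moreover have "x \<in> DV ip Zn" if "x \<in> half_cube" for x
    unfolding DV_Zn
    using order_trans[OF half_cube_ip_le_weighted_l1_norm[OF that] weighted_l1_norm_le_ip_self]
    by (simp add: Zn_def)
  ultimately show ?thesis
    unfolding half_cube_def by blast
qed

lemma orth_proj_half_cube_subset_DV:
  assumes "\<forall>v\<in>L. int_vec v"
  shows "orth_proj ip (span L) ` half_cube \<subseteq> DV ip L"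
proof
  fix x assume "x \<in> orth_proj ip (span L) ` half_cube"
  then obtain y where y: "y \<in> half_cube" and x: "x = orth_proj ip (span L) y"
    by blast
  have "2 * ip x v \<le> ip v v" if "v \<in> L" for v
  proof -
    have "2 * ip x v = 2 * ip y v"
      using that x by (simp add: ip_orth_proj span_base)
    also have "\<dots> \<le> weighted_l1_norm v"
      by (rule half_cube_ip_le_weighted_l1_norm[OF y])
    also have "\<dots> \<le> ip v v"
      using that assms by (simp add: weighted_l1_norm_le_ip_self)
    finally show ?thesis .
  qed
  then show "x \<in> DV ip L"
    using x by (simp add: mem_DV_iff orth_proj_in)
qed

lemma mem_orth_proj_half_cubeI:
  assumes F: "subspace F" and x: "x \<in> F"
    and bound: "\<And>u. u \<in> F \<Longrightarrow> 2 * ip u x \<le> weighted_l1_norm u"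
  shows "x \<in> orth_proj ip F ` half_cube"
proof (rule ccontr)
  let ?P = "orth_proj ip F"
  assume "x \<notin> ?P ` half_cube"
  moreover have cube_box: "(half_cube :: (real^'n) set) = cbox (\<chi> i. -1/2) (\<chi> i. 1/2)"
    by (auto simp: half_cube_def mem_box_cart)
  have "linear ?P"
    using F by (rule linear_orth_proj)
  then have "compact (?P ` half_cube)" "convex (?P ` half_cube)"
    unfolding cube_box
    by (simp_all add: compact_continuous_image linear_continuous_on linear_conv_bounded_linear
        convex_linear_image)
  ultimately obtain a b where ax: "inner a x < b" and a_image: "\<And>k. k \<in> ?P ` half_cube \<Longrightarrow> b < inner a k"
    using separating_hyperplane_closed_point compact_imp_closed by metis
  \<comment> \<open>The separating functional inner a, written as ip u on F.\<close>
  define u where "u = ?P (\<chi> i. a$i / w i)"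
  have ip_u: "ip u k = inner a k" if "k \<in> F" for k
  proof -
    have "ip u k = ip (\<chi> i. a$i / w i) k"
      using F that by (simp add: u_def ip_orth_proj)
    also have "\<dots> = inner a k"
      using weight_pos unfolding ip_eq inner_vec_def inner_real_def
      by (intro sum.cong) (simp_all add: field_simps less_imp_neq[symmetric])
    finally show ?thesis .
  qed
  \<comment> \<open>The point of the cube minimising ip u.\<close>
  define y where "y = (\<chi> i. - sgn (u$i) / 2)"
  have "y \<in> half_cube"
    by (auto simp: half_cube_def y_def sgn_if)
  have "w i * u$i * (- sgn (u$i) / 2) = - (w i * \<bar>u$i\<bar>) / 2" for i
    by (cases "u$i" "0::real" rule: linorder_cases) auto
  then have "ip u y = (\<Sum>i\<in>UNIV. - (w i * \<bar>u$i\<bar>) / 2)"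
    unfolding ip_eq y_def vec_lambda_beta by (intro sum.cong refl)
  also have "\<dots> = - weighted_l1_norm u / 2"
    by (simp add: weighted_l1_norm_def sum_negf sum_divide_distrib)
  finally have "ip u y = - weighted_l1_norm u / 2" .
  moreover have "b < ip u y"
  proof -
    have "b < inner a (?P y)"
      using a_image \<open>y \<in> half_cube\<close> by blast
    also have "\<dots> = ip u (?P y)"
      using ip_u F by (simp add: orth_proj_in)
    also have "\<dots> = ip u y"
      using F orth_proj_in[OF F] ip_orth_proj[OF F] ip_commute unfolding u_def by metis
    finally show ?thesis .
  qed
  moreover have "ip u x < b"
    using ax ip_u[OF x] by simp
  moreover have "2 * ip (- u) x \<le> weighted_l1_norm u"
    using bound[of "- u"] F by (simp add: u_def orth_proj_in subspace_neg weighted_l1_norm_uminus)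
  ultimately show False
    by (simp add: ip_uminus_left)
qed

lemma DV_ip_le_weighted_l1_norm:
  assumes L: "is_int_lattice L" and zono: "zonotopal_lattice L ip" and x: "x \<in> DV ip L"
    and u: "u \<in> L"
  shows "2 * ip x u \<le> weighted_l1_norm u"
proof -
  have DV_ineq: "2 * ip x v \<le> ip v v" if "v \<in> L" for v
    using x that by (simp add: mem_DV_iff)
  have "2 * ip x v \<le> weighted_l1_norm v" if "v \<in> L" "(\<Sum>i\<in>UNIV. \<bar>v$i\<bar>) \<le> real n" for n v
    using that
  proof (induction n arbitrary: v)
    case 0
    have "\<bar>v$i\<bar> \<le> (\<Sum>j\<in>UNIV. \<bar>v$j\<bar>)" for i
      by (rule member_le_sum) auto
    then have "\<bar>v$i\<bar> \<le> 0" for i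
      using "0.prems"(2) order_trans by fastforce
    then have "v = 0"
      by (simp add: vec_eq_iff)
    then show ?case
      by (simp add: weighted_l1_norm_def ip_eq)
  next
    case (Suc n)
    show ?case
    proof (cases "v = 0")
      case True
      then show ?thesis
        by (simp add: weighted_l1_norm_def ip_eq)
    next
      case False
      then obtain e where e: "elementary L e" "conformal e v"
        using zonotopal_lattice_conformal_elementary[OF L zono Suc.prems(1)] by blast
      have e_sign: "\<forall>i. e$i \<in> {-1, 0, 1}"
        using e(1) by (simp add: elementary_def)
      have split: "\<bar>v$i\<bar> = \<bar>(v - e)$i\<bar> + \<bar>e$i\<bar>" for i
        using conformal_abs_split[OF e(2)] e_sign int_lattice_int_vec[OF L Suc.prems(1)]
        by (simp add: int_vec_def)
      obtain j where "e$j \<noteq> 0"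
        using e(1) by (auto simp: elementary_def vec_eq_iff)
      then have "1 \<le> (\<Sum>i\<in>UNIV. \<bar>e$i\<bar>)"
        using e_sign member_le_sum[of j UNIV "\<lambda>i. \<bar>e$i\<bar>"] by force
      then have "(\<Sum>i\<in>UNIV. \<bar>(v - e)$i\<bar>) \<le> real n"
        using Suc.prems(2) by (simp add: split sum.distrib)
      moreover have "v - e \<in> L"
        using L Suc.prems(1) e(1) by (simp add: elementary_def int_lattice_diff)
      ultimately have "2 * ip x (v - e) \<le> weighted_l1_norm (v - e)"
        by (rule Suc.IH[rotated])
      moreover have "2 * ip x e \<le> weighted_l1_norm e"
        using DV_ineq[of e] e(1) e_sign by (simp add: elementary_def weighted_l1_norm_eq_ip_self)
      moreover have "weighted_l1_norm v = weighted_l1_norm (v - e) + weighted_l1_norm e"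
        unfolding weighted_l1_norm_def by (subst split) (simp add: algebra_simps sum.distrib)
      ultimately show ?thesis
        by (simp add: ip_diff_right)
    qed
  qed
  then show ?thesis
    using u real_nat_ceiling_ge by blast
qed

lemma DV_ip_le_weighted_l1_norm_span:
  assumes L: "is_int_lattice L" and zono: "zonotopal_lattice L ip" and x: "x \<in> DV ip L"
    and u: "u \<in> span L"
  shows "2 * ip x u \<le> weighted_l1_norm u"
proof -
  have "0 \<le> weighted_l1_norm u - 2 * ip x u"
  proof (rule nonneg_on_span_if_nonneg_on_int_combinations[OF _ _ _ _ u])
    show "(\<Sum>s\<in>S. k s *\<^sub>R s) \<in> L" if "finite S" "S \<subseteq> L" "\<forall>s\<in>S. k s \<in> \<int>" for S k
      using int_lattice_int_combination[OF L that] .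
    show "0 \<le> weighted_l1_norm v - 2 * ip x v" if "v \<in> L" for v
      using DV_ip_le_weighted_l1_norm[OF L zono x that] by simp
    show "weighted_l1_norm (c *\<^sub>R v) - 2 * ip x (c *\<^sub>R v) = c * (weighted_l1_norm v - 2 * ip x v)"
      if "0 < c" for c v
      using that by (simp add: weighted_l1_norm_scaleR ip_scaleR_right algebra_simps)
    show "continuous_on UNIV (\<lambda>v. weighted_l1_norm v - 2 * ip x v)"
      unfolding ip_eq by (intro continuous_intros continuous_on_weighted_l1_norm)
  qed
  then show ?thesis
    by simp
qed

lemma DV_eq_orth_proj_half_cube:
  assumes L: "is_int_lattice L" and zono: "zonotopal_lattice L ip"
  shows "DV ip L = orth_proj ip (span L) ` half_cube"
proof
  show "DV ip L \<subseteq> orth_proj ip (span L) ` half_cube"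
    using DV_ip_le_weighted_l1_norm_span[OF L zono]
    by (auto simp: mem_DV_iff ip_commute intro!: mem_orth_proj_half_cubeI)
  show "orth_proj ip (span L) ` half_cube \<subseteq> DV ip L"
    using int_lattice_int_vec[OF L] by (simp add: orth_proj_half_cube_subset_DV)
qed

end

theorem theorem1:
  fixes L :: "(real^'n) set" and ip :: "real^'n \<Rightarrow> real^'n \<Rightarrow> real"
  assumes "is_int_lattice L"
    and "is_inner_product ip"
    and "\<forall>i j. i \<noteq> j \<longrightarrow> ip (axis i 1) (axis j 1) = 0"
    and "zonotopal_lattice L ip"
  shows "DV ip L = orth_proj ip (span L) ` DV ip Zn
       \<and> orth_proj ip (span L) ` DV ip Zn = orth_proj ip (span L) ` half_cube"
proof -
  have "diagonal_inner_product ip (\<lambda>i. ip (axis i 1) (axis i 1))"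
    using assms(2,3) bilinear_diagonal_expansion
    by unfold_locales (auto simp: is_inner_product_def)
  then interpret diagonal_inner_product ip "\<lambda>i. ip (axis i 1) (axis i 1)" .
  show ?thesis
    using assms(1,4) by (simp add: DV_Zn_eq_half_cube DV_eq_orth_proj_half_cube)
qed

end
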